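(* For $\alpha\ge\beta\ge-1/2$ and integers $n\ge(\alpha+|\beta|)^2$, $$p_n^{(\alpha,\beta)}(1)\sim\frac{n^{\alpha+1/2}}{2^{(\alpha+\beta)/2}\Gamma(\alpha+1)},\qquad K_n^{(\alpha,\beta)}(1)\sim\frac{n^{2\alpha+2}}{2^{\alpha+\beta}\Gamma(\alpha+1)\Gamma(\alpha+2)},$$ where the constants involved in $\sim$ are absolute constants, independent of $n$, $\alpha$, $\beta$.
   Context: For $\alpha,\beta>-1$, $p_\ell^{(\alpha,\beta)}$ is the Jacobi polynomial of degree $\ell$ with positive leading coefficient, normalized so that $\int_{-1}^1p_\ell^{(\alpha,\beta)}(x)p_j^{(\alpha,\beta)}(x)(1-x)^\alpha(1+x)^\beta dx=\delta_{\ell,j}$; $K_n^{(\alpha,\beta)}(x)=\sum_{\ell=0}^{n-1}p_\ell^{(\alpha,\beta)}(1)p_\ell^{(\alpha,\beta)}(x)$. $A\sim B$ means $c_1B\le A\le c_2B$ for absolute positive constants $c_1,c_2$. *)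

theory Defs
  imports "HOL-Analysis.Analysis"
begin

text \<open>Classical (unnormalized) Jacobi polynomial P_n^(a,b)(x), Szego (4.3.2):
  sum over k of C(n+a, n-k) C(n+b, k) ((x-1)/2)^k ((x+1)/2)^(n-k).
  It has positive leading coefficient for a, b > -1.\<close>
definition jacobiP :: "real \<Rightarrow> real \<Rightarrow> nat \<Rightarrow> real \<Rightarrow> real" where
  "jacobiP a b n x =
     (\<Sum>k=0..n. ((real n + a) gchoose (n - k)) * ((real n + b) gchoose k)
                 * ((x - 1) / 2) ^ k * ((x + 1) / 2) ^ (n - k))"

definition jacobi_weight :: "real \<Rightarrow> real \<Rightarrow> real \<Rightarrow> real" where
  "jacobi_weight a b x = (1 - x) powr a * (1 + x) powr b"

definition jacobi_p :: "real \<Rightarrow> real \<Rightarrow> nat \<Rightarrow> real \<Rightarrow> real" where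
  "jacobi_p a b n x =
     jacobiP a b n x / sqrt (LBINT t=-1..1. (jacobiP a b n t)\<^sup>2 * jacobi_weight a b t)"

definition jacobi_K :: "real \<Rightarrow> real \<Rightarrow> nat \<Rightarrow> real \<Rightarrow> real" where
  "jacobi_K a b n x = (\<Sum>l<n. jacobi_p a b l 1 * jacobi_p a b l x)"

end

(*
  Expanding P_n in the basis (1 - x)^k (1 + x)^(n - k) turns every moment
  of P_n (1 - x)^k (1 + x)^(n - k) against the Jacobi weight into a sum of
  Beta integrals.  Written with Gamma functions, that sum is an n-th finite
  difference of a polynomial of degree n, so it equals (-1)^k times a constant
  independent of k.  Summing against the coefficients of P_n (Vandermonde)
  gives the classical squared norm h_n, and with P_n(1) = C(n + a, n) one gets
  p_n(1)^2 in closed form; K_n(1) = sum of p_l(1)^2 then has the closed form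
  n (n + b) Gamma(n+a+b+1) Gamma(n+a+1) / (2^(a+b+1) Gamma(a+1) Gamma(a+2) n! Gamma(n+b+1))
  by induction.  Both closed forms are the claimed main terms times the two
  ratios Gamma(x + a) / (Gamma x n^a) with x = n + 1 and x = n + b + 1, and the
  log-convexity of Gamma bounds these ratios by absolute constants as soon as
  n >= (a + |b|)^2.
*)

theory Submission
  imports Defs "HOL-Computational_Algebra.Formal_Power_Series" "HOL-Computational_Algebra.Polynomial"
begin

section \<open>Alternating binomial sums of polynomials\<close>

lemma alternating_binomial_absorption:
  "(-1)^Suc i * real (Suc n choose Suc i) * real (Suc i) ^ Suc r
    = - real (Suc n) * ((-1)^i * real (n choose i) * real (Suc i) ^ r)"
proof -
  have e: "real (Suc n choose Suc i) * real (Suc i) = real (Suc n) * real (n choose i)"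
    using Suc_times_binomial_eq[of n i] by (metis of_nat_mult)
  have "(-1)^Suc i * real (Suc n choose Suc i) * real (Suc i) ^ Suc r
      = - ((-1)^i * (real (Suc n choose Suc i) * real (Suc i)) * real (Suc i) ^ r)"
    by simp
  also have "\<dots> = - real (Suc n) * ((-1)^i * real (n choose i) * real (Suc i) ^ r)"
    by (simp only: e) (simp add: algebra_simps)
  finally show ?thesis .
qed

lemma sum_alternating_binomial_power:
  fixes n m :: nat
  assumes "m \<le> n"
  shows "(\<Sum>i\<le>n. (-1)^i * real (n choose i) * real i ^ m) = (if m = n then (-1)^n * fact n else 0)"
  using assms
proof (induction n arbitrary: m)
  case 0
  then show ?case by simp
next
  case (Suc n)
  show ?case
  proof (cases m)
    case 0
    then show ?thesis using choose_alternating_sum[of "Suc n", where 'a=real] by simp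
  next
    case (Suc r)
    with Suc.prems have r: "r \<le> n" by simp
    have shift: "(-1)^Suc i * real (Suc n choose Suc i) * real (Suc i) ^ m
        = - real (Suc n) * ((-1)^i * real (n choose i) * real (Suc i) ^ r)" for i
      unfolding \<open>m = Suc r\<close> by (rule alternating_binomial_absorption)
    have binomial: "real (Suc i) ^ r = (\<Sum>t\<le>r. real (r choose t) * real i ^ t)" for i
      using binomial_ring[of "real i" 1 r] by (simp add: add.commute)
    have "(\<Sum>i\<le>Suc n. (-1)^i * real (Suc n choose i) * real i ^ m)
        = (\<Sum>i\<le>n. (-1)^(Suc i) * real (Suc n choose Suc i) * real (Suc i) ^ m)"
      by (subst sum.atMost_Suc_shift) (simp add: \<open>m = Suc r\<close>)
    also have "\<dots> = - real (Suc n) * (\<Sum>i\<le>n. (-1)^i * real (n choose i) * real (Suc i) ^ r)"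
      by (simp only: shift sum_distrib_left)
    also have "(\<Sum>i\<le>n. (-1)^i * real (n choose i) * real (Suc i) ^ r)
        = (\<Sum>i\<le>n. \<Sum>t\<le>r. real (r choose t) * ((-1)^i * real (n choose i) * real i ^ t))"
      by (simp only: binomial sum_distrib_left) (simp add: mult_ac)
    also have "\<dots> = (\<Sum>t\<le>r. real (r choose t) * (\<Sum>i\<le>n. (-1)^i * real (n choose i) * real i ^ t))"
      by (subst sum.swap) (simp add: sum_distrib_left)
    also have "\<dots> = (if r = n then (-1)^n * fact n else 0)"
      using r by (simp add: Suc.IH if_distrib sum.delta cong: if_cong)
    finally show ?thesis using r Suc by (auto simp: algebra_simps)
  qed
qed

lemma sum_alternating_binomial_poly:
  fixes p :: "real poly"
  assumes "degree p \<le> n"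
  shows "(\<Sum>i\<le>n. (-1)^i * real (n choose i) * poly p (real i)) = (-1)^n * fact n * coeff p n"
proof -
  have "poly p x = (\<Sum>j\<le>n. coeff p j * x ^ j)" for x
    using assms by (simp add: poly_altdef sum.mono_neutral_left coeff_eq_0 cong: sum.cong)
  then have "(\<Sum>i\<le>n. (-1)^i * real (n choose i) * poly p (real i))
      = (\<Sum>i\<le>n. \<Sum>j\<le>n. coeff p j * ((-1)^i * real (n choose i) * real i ^ j))"
    by (simp add: sum_distrib_left mult_ac)
  also have "\<dots> = (\<Sum>j\<le>n. coeff p j * (\<Sum>i\<le>n. (-1)^i * real (n choose i) * real i ^ j))"
    by (subst sum.swap) (simp add: sum_distrib_left)
  also have "\<dots> = (-1)^n * fact n * coeff p n"
    by (simp add: sum_alternating_binomial_power if_distrib sum.delta cong: if_cong)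
  finally show ?thesis .
qed

lemma pochhammer_affine_poly:
  fixes c d :: real
  assumes "d \<noteq> 0"
  obtains p where "\<And>x. poly p x = pochhammer (c + d * x) m" "degree p = m" "lead_coeff p = d ^ m"
proof
  let ?p = "\<Prod>j<m. [:c + real j, d:]"
  show "poly ?p x = pochhammer (c + d * x) m" for x
    by (simp add: poly_prod pochhammer_prod atLeast0LessThan algebra_simps)
  show "degree ?p = m"
    using assms by (simp add: degree_prod_eq_sum_degree)
  show "lead_coeff ?p = d ^ m"
    using assms by (simp add: lead_coeff_prod)
qed

lemma sum_alternating_binomial_pochhammer:
  fixes a c :: real
  assumes "k \<le> n"
  shows "(\<Sum>i\<le>n. (-1)^i * real (n choose i) * (pochhammer (a + real i) k * pochhammer (c - real i) (n - k)))
    = (-1)^k * fact n"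
proof -
  obtain p where p: "\<And>x. poly p x = pochhammer (a + 1 * x) k" "degree p = k" "lead_coeff p = 1 ^ k"
    using pochhammer_affine_poly[of 1 a k] by auto
  obtain q where q: "\<And>x. poly q x = pochhammer (c + -1 * x) (n - k)" "degree q = n - k"
      "lead_coeff q = (-1) ^ (n - k)"
    using pochhammer_affine_poly[of "-1" c "n - k"] by auto
  have p0: "p \<noteq> 0" and q0: "q \<noteq> 0"
    using p(3) q(3) by auto
  have deg: "degree (p * q) = n"
    using assms p(2) q(2) p0 q0 by (simp add: degree_mult_eq)
  have "(\<Sum>i\<le>n. (-1)^i * real (n choose i) * poly (p * q) (real i)) = (-1)^n * fact n * coeff (p * q) n"
    using deg by (intro sum_alternating_binomial_poly) simp
  also have "coeff (p * q) n = (-1) ^ (n - k)"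
    using deg p(3) q(3) by (metis lead_coeff_mult mult_1 power_one)
  also have "(-1) ^ n * fact n * (-1) ^ (n - k) = ((-1) ^ k * fact n :: real)"
  proof -
    have "(-1::real) ^ n = (-1) ^ k * (-1) ^ (n - k)"
      using assms by (simp flip: power_add)
    then show ?thesis
      by (simp add: minus_one_mult_self mult_ac)
  qed
  finally show ?thesis using p(1) q(1) by simp
qed

section \<open>The squared norm of the Jacobi polynomials\<close>

lemma Gamma_plus1_real: "(z::real) > 0 \<Longrightarrow> Gamma (z + 1) = z * Gamma z"
  by (rule Gamma_plus1) (auto elim!: nonpos_Ints_cases)

lemma Gamma_of_nat_plus1: "Gamma (real n + 1) = fact n"
  using Gamma_fact[of n, where 'a=real] by (simp add: add.commute)

lemma pochhammer_Gamma_real: "(z::real) > 0 \<Longrightarrow> pochhammer z m = Gamma (z + real m) / Gamma z"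
  by (rule pochhammer_Gamma) (auto elim!: nonpos_Ints_cases)

lemma gbinomial_Gamma_real:
  assumes "x - real m + 1 > 0"
  shows "x gchoose m = Gamma (x + 1) / (fact m * Gamma (x - real m + 1))"
  using pochhammer_Gamma_real[OF assms, of m] by (simp add: gbinomial_pochhammer')

lemma power_mult_powr: "(y::real) \<ge> 0 \<Longrightarrow> y ^ m * y powr a = y powr (real m + a)"
  by (cases "y = 0") (auto simp: powr_add powr_realpow)

lemma has_integral_jacobi_weight:
  fixes p q :: real
  assumes p: "p > -1" and q: "q > -1"
  shows "(jacobi_weight p q has_integral 2 powr (p + q + 1) * Beta (p + 1) (q + 1)) {-1..1}"
proof -
  have "((\<lambda>t. t powr (q + 1 - 1) * (1 - t) powr (p + 1 - 1)) has_integral Beta (q + 1) (p + 1)) {0..1::real}"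
    using has_integral_Beta_real[of "q + 1" "p + 1"] p q by simp
  then have beta01: "((\<lambda>t. t powr q * (1 - t) powr p) has_integral Beta (p + 1) (q + 1)) (cbox 0 1)"
    by (simp add: Beta_commute)
  have "(\<lambda>x. (1 / (1/2::real)) *\<^sub>R x + - ((1 / (1/2)) *\<^sub>R (1/2))) ` cbox 0 1 = {-1..1::real}"
  proof -
    have "x \<in> (\<lambda>x. 2 * x - 1) ` {0..1::real}" if "-1 \<le> x" "x \<le> 1" for x :: real
      by (rule image_eqI[of _ _ "(x + 1) / 2"]) (use that in \<open>auto simp: field_simps\<close>)
    then show ?thesis by auto
  qed
  with has_integral_affinity[OF beta01, of "1/2" "1/2"]
  have "((\<lambda>x. ((x + 1) / 2) powr q * ((1 - x) / 2) powr p) has_integral 2 * Beta (p + 1) (q + 1)) {-1..1}"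
    by (simp add: field_simps)
  from has_integral_mult_right[OF this, of "2 powr (p + q)"]
  have scaled: "((\<lambda>x. 2 powr (p + q) * (((x + 1) / 2) powr q * ((1 - x) / 2) powr p))
      has_integral 2 powr (p + q + 1) * Beta (p + 1) (q + 1)) {-1..1}"
    by (simp add: powr_add mult_ac)
  have "2 powr (p + q) * (((x + 1) / 2) powr q * ((1 - x) / 2) powr p) = jacobi_weight p q x"
    if "x \<in> {-1..1}" for x
  proof -
    have "((x + 1) / 2) powr q * ((1 - x) / 2) powr p = (x + 1) powr q / 2 powr q * ((1 - x) powr p / 2 powr p)"
      using that by (simp add: powr_divide)
    then show ?thesis by (simp add: jacobi_weight_def powr_add field_simps)
  qed
  then show ?thesis
    by (rule has_integral_eq[OF _ scaled])
qed

definition jacobiP_coeff :: "real \<Rightarrow> real \<Rightarrow> nat \<Rightarrow> nat \<Rightarrow> real" where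
  "jacobiP_coeff a b n k = ((real n + a) gchoose (n - k)) * ((real n + b) gchoose k)"

lemma jacobiP_eq_sum:
  "jacobiP a b n x = (\<Sum>k\<le>n. jacobiP_coeff a b n k * (-1)^k / 2^n * ((1 - x)^k * (1 + x)^(n - k)))"
  unfolding jacobiP_def atLeast0AtMost
proof (rule sum.cong[OF refl])
  fix k assume "k \<in> {..n}"
  then have "(2::real)^n = 2^k * 2^(n - k)" by (simp flip: power_add)
  moreover have "((x - 1) / 2) ^ k = (-1)^k * (1 - x)^k / 2^k"
    by (simp add: power_divide power_minus[symmetric])
  ultimately show "((real n + a) gchoose (n - k)) * ((real n + b) gchoose k) * ((x - 1) / 2) ^ k
        * ((x + 1) / 2) ^ (n - k)
      = jacobiP_coeff a b n k * (-1)^k / 2^n * ((1 - x)^k * (1 + x)^(n - k))"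
    by (simp add: jacobiP_coeff_def power_divide add.commute)
qed

lemma sum_jacobiP_coeff: "(\<Sum>k\<le>n. jacobiP_coeff a b n k) = (2 * real n + a + b) gchoose n"
proof -
  have "(\<Sum>k\<le>n. jacobiP_coeff a b n k)
      = (\<Sum>k=0..n. ((real n + b) gchoose k) * ((real n + a) gchoose (n - k)))"
    by (simp add: jacobiP_coeff_def atLeast0AtMost mult.commute)
  also have "\<dots> = (real n + b + (real n + a)) gchoose n"
    by (rule gbinomial_Vandermonde)
  finally show ?thesis by (simp add: algebra_simps)
qed

lemma sum_jacobiP_coeff_Beta:
  assumes a: "a > -1" and b: "b > -1" and k: "k \<le> n"
  shows "(\<Sum>i\<le>n. (-1)^i * jacobiP_coeff a b n i
            * Beta (real (k + i) + a + 1) (real ((n - k) + (n - i)) + b + 1))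
       = (-1)^k * (Gamma (real n + a + 1) * Gamma (real n + b + 1) / Gamma (2 * real n + a + b + 2))"
proof -
  define K where "K = Gamma (real n + a + 1) * Gamma (real n + b + 1) / Gamma (2 * real n + a + b + 2)"
  \<comment> \<open>in Gamma form, the summand is a polynomial of degree n in i times (-1)^i (n choose i)\<close>
  have summand: "(-1)^i * jacobiP_coeff a b n i
            * Beta (real (k + i) + a + 1) (real ((n - k) + (n - i)) + b + 1)
      = K / fact n * ((-1)^i * real (n choose i) *
        (pochhammer (a + 1 + real i) k * pochhammer (real n + b + 1 - real i) (n - k)))"
    if i: "i \<le> n" for i
  proof -
    have g1: "(real n + a) gchoose (n - i) = Gamma (real n + a + 1) / (fact (n - i) * Gamma (real i + a + 1))"
      using gbinomial_Gamma_real[of "real n + a" "n - i"] i a by (simp add: of_nat_diff algebra_simps)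
    have g2: "(real n + b) gchoose i = Gamma (real n + b + 1) / (fact i * Gamma (real n - real i + b + 1))"
      using gbinomial_Gamma_real[of "real n + b" i] i b by (simp add: algebra_simps)
    have beta: "Beta (real (k + i) + a + 1) (real ((n - k) + (n - i)) + b + 1)
       = Gamma (real i + a + 1 + real k) * Gamma (real n - real i + b + 1 + real (n - k))
         / Gamma (2 * real n + a + b + 2)"
      using i k by (simp add: Beta_def of_nat_diff algebra_simps)
    have p1: "pochhammer (a + 1 + real i) k = Gamma (real i + a + 1 + real k) / Gamma (real i + a + 1)"
      using pochhammer_Gamma_real[of "a + 1 + real i" k] a by (simp add: algebra_simps)
    have p2: "pochhammer (real n + b + 1 - real i) (n - k)
        = Gamma (real n - real i + b + 1 + real (n - k)) / Gamma (real n - real i + b + 1)"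
      using pochhammer_Gamma_real[of "real n + b + 1 - real i" "n - k"] b i by (simp add: algebra_simps)
    have "Gamma (real i + a + 1) > 0" "Gamma (real n - real i + b + 1) > 0"
      "Gamma (2 * real n + a + b + 2) > 0"
      using a b i by auto
    then show ?thesis
      unfolding jacobiP_coeff_def g1 g2 beta p1 p2 binomial_fact[OF i] K_def
      by (simp add: field_simps)
  qed
  have "(\<Sum>i\<le>n. (-1)^i * jacobiP_coeff a b n i
            * Beta (real (k + i) + a + 1) (real ((n - k) + (n - i)) + b + 1))
     = (\<Sum>i\<le>n. K / fact n * ((-1)^i * real (n choose i) *
        (pochhammer (a + 1 + real i) k * pochhammer (real n + b + 1 - real i) (n - k))))"
    by (intro sum.cong refl summand) simp
  also have "\<dots> = K / fact n * (\<Sum>i\<le>n. (-1)^i * real (n choose i) *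
        (pochhammer (a + 1 + real i) k * pochhammer (real n + b + 1 - real i) (n - k)))"
    by (simp only: sum_distrib_left)
  also have "\<dots> = (-1)^k * K"
    by (simp add: sum_alternating_binomial_pochhammer[OF k])
  finally show ?thesis by (simp add: K_def)
qed

lemma jacobiP_moment_integrand:
  assumes x: "x \<in> {-1..1}" and k: "k \<le> n"
  shows "jacobiP a b n x * ((1 - x)^k * (1 + x)^(n - k)) * jacobi_weight a b x
    = (\<Sum>i\<le>n. jacobiP_coeff a b n i * (-1)^i / 2^n
        * jacobi_weight (real (k + i) + a) (real ((n - k) + (n - i)) + b) x)"
proof -
  define C where "C i = jacobiP_coeff a b n i * (-1)^i / 2^n" for i
  have expansion: "jacobiP a b n x = (\<Sum>i\<le>n. C i * ((1 - x)^i * (1 + x)^(n - i)))"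
    by (simp only: jacobiP_eq_sum C_def)
  have "jacobiP a b n x * ((1 - x)^k * (1 + x)^(n - k)) * jacobi_weight a b x
    = (\<Sum>i\<le>n. C i * (((1 - x)^i * (1 - x)^k * (1 - x) powr a)
        * ((1 + x)^(n - i) * (1 + x)^(n - k) * (1 + x) powr b)))"
    unfolding expansion jacobi_weight_def sum_distrib_right by (intro sum.cong refl) (simp only: mult_ac)
  moreover have "(1 - x)^i * (1 - x)^k * (1 - x) powr a = (1 - x) powr (real (k + i) + a)" for i
    using x power_mult_powr[of "1 - x" "k + i" a] by (simp add: power_add mult.commute)
  moreover have "(1 + x)^(n - i) * (1 + x)^(n - k) * (1 + x) powr b
      = (1 + x) powr (real ((n - k) + (n - i)) + b)" for i
    using x power_mult_powr[of "1 + x" "(n - k) + (n - i)" b] by (simp add: power_add mult.commute)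
  ultimately show ?thesis
    by (simp only: jacobi_weight_def C_def)
qed

lemma jacobiP_moment_has_integral:
  assumes a: "a > -1" and b: "b > -1" and k: "k \<le> n"
  shows "((\<lambda>x. jacobiP a b n x * ((1 - x)^k * (1 + x)^(n - k)) * jacobi_weight a b x)
    has_integral (-1)^k * 2^n * 2 powr (a + b + 1)
      * (Gamma (real n + a + 1) * Gamma (real n + b + 1) / Gamma (2 * real n + a + b + 2))) {-1..1}"
proof -
  define C where "C i = jacobiP_coeff a b n i * (-1)^i / 2^n" for i
  define p where "p i = real (k + i) + a" for i
  define q where "q i = real ((n - k) + (n - i)) + b" for i
  have "(jacobi_weight (p i) (q i) has_integral 2 powr (p i + q i + 1) * Beta (p i + 1) (q i + 1)) {-1..1}"
    for i
    using a b by (intro has_integral_jacobi_weight) (simp_all add: p_def q_def)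
  then have termwise: "((\<lambda>x. \<Sum>i\<le>n. C i * jacobi_weight (p i) (q i) x)
      has_integral (\<Sum>i\<le>n. C i * (2 powr (p i + q i + 1) * Beta (p i + 1) (q i + 1)))) {-1..1}"
    by (intro has_integral_sum finite_atMost has_integral_mult_right)
  have pointwise: "jacobiP a b n x * ((1 - x)^k * (1 + x)^(n - k)) * jacobi_weight a b x
      = (\<Sum>i\<le>n. C i * jacobi_weight (p i) (q i) x)" if "x \<in> {-1..1}" for x
    using jacobiP_moment_integrand[OF that k] by (simp add: C_def p_def q_def)
  have total: "(\<Sum>i\<le>n. C i * (2 powr (p i + q i + 1) * Beta (p i + 1) (q i + 1)))
      = (-1)^k * 2^n * 2 powr (a + b + 1)
        * (Gamma (real n + a + 1) * Gamma (real n + b + 1) / Gamma (2 * real n + a + b + 2))"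
  proof -
    have "2 powr (p i + q i + 1) = 2^n * 2^n * 2 powr (a + b + 1)" if "i \<le> n" for i
    proof -
      have "p i + q i + 1 = real (n + n) + (a + b + 1)"
        using that k by (simp add: p_def q_def of_nat_diff)
      then have "2 powr (p i + q i + 1) = 2 powr real (n + n) * 2 powr (a + b + 1)"
        by (simp only: powr_add)
      then show ?thesis by (simp only: powr_realpow power_add)
    qed
    then have "(\<Sum>i\<le>n. C i * (2 powr (p i + q i + 1) * Beta (p i + 1) (q i + 1)))
        = (\<Sum>i\<le>n. 2^n * 2 powr (a + b + 1) * ((-1)^i * jacobiP_coeff a b n i * Beta (p i + 1) (q i + 1)))"
      by (intro sum.cong refl) (simp add: C_def)
    then show ?thesis
      unfolding sum_distrib_left[symmetric] p_def q_def sum_jacobiP_coeff_Beta[OF a b k] by simp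
  qed
  show ?thesis
    by (rule has_integral_eq[OF _ termwise[unfolded total]]) (simp add: pointwise)
qed

definition jacobiP_sqnorm :: "real \<Rightarrow> real \<Rightarrow> nat \<Rightarrow> real" where
  "jacobiP_sqnorm a b n = 2 powr (a + b + 1)
     * (Gamma (real n + a + 1) * Gamma (real n + b + 1) / Gamma (2 * real n + a + b + 2))
     * ((2 * real n + a + b) gchoose n)"

lemma jacobiP_sq_has_integral:
  assumes a: "a > -1" and b: "b > -1"
  shows "((\<lambda>x. (jacobiP a b n x)\<^sup>2 * jacobi_weight a b x) has_integral jacobiP_sqnorm a b n) {-1..1}"
proof -
  define C where "C k = jacobiP_coeff a b n k * (-1)^k / 2^n" for k
  define K where "K = Gamma (real n + a + 1) * Gamma (real n + b + 1) / Gamma (2 * real n + a + b + 2)"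
  have termwise: "((\<lambda>x. \<Sum>k\<le>n. C k * (jacobiP a b n x * ((1 - x)^k * (1 + x)^(n - k)) * jacobi_weight a b x))
      has_integral (\<Sum>k\<le>n. C k * ((-1)^k * 2^n * 2 powr (a + b + 1) * K))) {-1..1}"
    unfolding K_def using jacobiP_moment_has_integral[OF a b]
    by (intro has_integral_sum finite_atMost has_integral_mult_right) auto
  have "C k * ((-1)^k * 2^n * 2 powr (a + b + 1) * K) = 2 powr (a + b + 1) * K * jacobiP_coeff a b n k"
    for k
    by (simp add: C_def flip: power_add)
  then have "(\<Sum>k\<le>n. C k * ((-1)^k * 2^n * 2 powr (a + b + 1) * K))
      = 2 powr (a + b + 1) * K * (\<Sum>k\<le>n. jacobiP_coeff a b n k)"
    by (simp only: sum_distrib_left)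
  also have "\<dots> = jacobiP_sqnorm a b n"
    by (simp only: sum_jacobiP_coeff jacobiP_sqnorm_def K_def)
  finally have total: "(\<Sum>k\<le>n. C k * ((-1)^k * 2^n * 2 powr (a + b + 1) * K)) = jacobiP_sqnorm a b n" .
  have pointwise: "(\<Sum>k\<le>n. C k * (jacobiP a b n x * ((1 - x)^k * (1 + x)^(n - k)) * jacobi_weight a b x))
      = (jacobiP a b n x)\<^sup>2 * jacobi_weight a b x" for x
  proof -
    have expansion: "jacobiP a b n x = (\<Sum>k\<le>n. C k * ((1 - x)^k * (1 + x)^(n - k)))"
      by (simp only: jacobiP_eq_sum C_def)
    have "(\<Sum>k\<le>n. C k * (jacobiP a b n x * ((1 - x)^k * (1 + x)^(n - k)) * jacobi_weight a b x))
        = jacobiP a b n x * jacobi_weight a b x * (\<Sum>k\<le>n. C k * ((1 - x)^k * (1 + x)^(n - k)))"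
      by (simp add: sum_distrib_left mult_ac)
    also have "\<dots> = (jacobiP a b n x)\<^sup>2 * jacobi_weight a b x"
      by (simp only: expansion[symmetric]) (simp add: power2_eq_square)
    finally show ?thesis .
  qed
  show ?thesis
    by (rule has_integral_eq[OF _ termwise[unfolded total]]) (simp only: pointwise)
qed

lemma LBINT_jacobiP_sq:
  assumes a: "a > -1" and b: "b > -1"
  shows "(LBINT t=-1..1. (jacobiP a b n t)\<^sup>2 * jacobi_weight a b t) = jacobiP_sqnorm a b n"
proof -
  define f where "f t = (jacobiP a b n t)\<^sup>2 * jacobi_weight a b t" for t
  have hi: "(f has_integral jacobiP_sqnorm a b n) {-1..1}"
    unfolding f_def by (rule jacobiP_sq_has_integral[OF a b])
  have "f absolutely_integrable_on {-1..1}"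
    using hi by (intro nonnegative_absolutely_integrable_1)
      (auto simp: integrable_on_def f_def jacobi_weight_def)
  then have "integrable lebesgue (\<lambda>x. indicator {-1..1} x *\<^sub>R f x)"
    by (simp add: set_integrable_def)
  moreover have "(\<lambda>x. indicator {-1..1::real} x *\<^sub>R f x) \<in> borel_measurable lborel"
    unfolding f_def jacobiP_def jacobi_weight_def by measurable
  ultimately have "set_integrable lborel {-1..1} f"
    by (simp add: set_integrable_def integrable_completion)
  then have "(LBINT t=-1..1. f t) = integral {-1..1} f"
    using interval_integral_eq_integral[of "-1" 1 f] by (simp add: one_ereal_def)
  also have "\<dots> = jacobiP_sqnorm a b n"
    using hi by (rule integral_unique)
  finally show ?thesis by (simp add: f_def)
qed

section \<open>Closed forms at 1\<close>

lemma jacobiP_at_1: "jacobiP a b n 1 = (real n + a) gchoose n"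
proof -
  have "jacobiP a b n 1 = (\<Sum>k=0..n. if k = 0 then (real n + a) gchoose n else 0)"
    unfolding jacobiP_def by (rule sum.cong) auto
  then show ?thesis by simp
qed

lemma jacobiP_sqnorm_pos:
  assumes "a > -1" "b > -1"
  shows "jacobiP_sqnorm a b n > 0"
proof -
  have "(2 * real n + a + b) gchoose n > 0"
  proof (cases "n = 0")
    case False
    then have "(2 * real n + a + b) gchoose n
        = Gamma (2 * real n + a + b + 1) / (fact n * Gamma (real n + a + b + 1))"
      using gbinomial_Gamma_real[of "2 * real n + a + b" n] assms by (simp add: algebra_simps)
    moreover have "Gamma (2 * real n + a + b + 1) > 0" "Gamma (real n + a + b + 1) > 0"
      using False assms by auto
    ultimately show ?thesis by simp
  qed simp
  then show ?thesis
    unfolding jacobiP_sqnorm_def using assms by simp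
qed

lemma jacobi_p_at_1:
  assumes "a > -1" "b > -1"
  shows "jacobi_p a b n 1 = ((real n + a) gchoose n) / sqrt (jacobiP_sqnorm a b n)"
  unfolding jacobi_p_def jacobiP_at_1 LBINT_jacobiP_sq[OF assms] ..

lemma jacobi_p_at_1_pos:
  assumes "a > -1" "b > -1"
  shows "jacobi_p a b n 1 > 0"
proof -
  have "(real n + a) gchoose n = Gamma (real n + a + 1) / (fact n * Gamma (a + 1))"
    using gbinomial_Gamma_real[of "real n + a" n] assms by simp
  moreover have "Gamma (real n + a + 1) > 0" "Gamma (a + 1) > 0"
    using assms by auto
  ultimately show ?thesis
    using jacobiP_sqnorm_pos[OF assms] by (simp add: jacobi_p_at_1[OF assms])
qed

text \<open>The hypothesis \<open>n \<ge> 1\<close> matters: for \<open>n = 0\<close> and \<open>a + b = -1\<close> the right-hand side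
  contains \<open>Gamma 0\<close>, which is \<open>0\<close> in Isabelle.\<close>

lemma jacobi_p_at_1_sq_Gamma:
  assumes a: "a > -1" and b: "b > -1" and n: "n \<ge> 1"
  shows "(jacobi_p a b n 1)\<^sup>2 = Gamma (real n + a + 1) * (2 * real n + a + b + 1) * Gamma (real n + a + b + 1)
      / (2 powr (a + b + 1) * Gamma (real n + 1) * (Gamma (a + 1))\<^sup>2 * Gamma (real n + b + 1))"
proof -
  have P: "(real n + a) gchoose n = Gamma (real n + a + 1) / (Gamma (real n + 1) * Gamma (a + 1))"
    using gbinomial_Gamma_real[of "real n + a" n] a by (simp add: Gamma_of_nat_plus1)
  have Q: "(2 * real n + a + b) gchoose n
      = Gamma (2 * real n + a + b + 1) / (Gamma (real n + 1) * Gamma (real n + a + b + 1))"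
    using gbinomial_Gamma_real[of "2 * real n + a + b" n] n a b
    by (simp add: Gamma_of_nat_plus1 Gamma_fact algebra_simps)
  have R: "Gamma (2 * real n + a + b + 2) = (2 * real n + a + b + 1) * Gamma (2 * real n + a + b + 1)"
    using Gamma_plus1_real[of "2 * real n + a + b + 1"] n a b by (simp add: algebra_simps)
  have "(jacobi_p a b n 1)\<^sup>2 = ((real n + a) gchoose n)\<^sup>2 / jacobiP_sqnorm a b n"
    using jacobiP_sqnorm_pos[OF a b, of n] by (simp add: jacobi_p_at_1[OF a b] power_divide)
  also have "\<dots> = Gamma (real n + a + 1) * (2 * real n + a + b + 1) * Gamma (real n + a + b + 1)
      / (2 powr (a + b + 1) * Gamma (real n + 1) * (Gamma (a + 1))\<^sup>2 * Gamma (real n + b + 1))"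
  proof -
    have field: "(gna / (gn * ga))\<^sup>2 / (P * (gna * gnb / (s * g2)) * (g2 / (gn * gnab)))
       = gna * s * gnab / (P * gn * ga\<^sup>2 * gnb)"
      if "gna > 0" "gnb > 0" "gn > 0" "ga > 0" "g2 > 0" "gnab > 0" "s > 0" "P > 0"
      for gna gnb gn ga g2 gnab s P :: real
      using that by (simp add: divide_simps power2_eq_square)
    show ?thesis
      unfolding jacobiP_sqnorm_def P Q R using a b n by (intro field) auto
  qed
  finally show ?thesis .
qed

lemma jacobi_p_0_at_1_sq:
  assumes "a > -1" "b > -1"
  shows "(jacobi_p a b 0 1)\<^sup>2 = Gamma (a + b + 2) / (2 powr (a + b + 1) * Gamma (a + 1) * Gamma (b + 1))"
  using jacobi_p_at_1[OF assms, of 0] jacobiP_sqnorm_pos[OF assms, of 0]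
  by (simp add: jacobiP_sqnorm_def power_divide)

lemma jacobi_K_at_1_Gamma:
  assumes a: "a > -1" and b: "b > -1" and n: "n \<ge> 1"
  shows "jacobi_K a b n 1 = real n * (real n + b) * Gamma (real n + a + b + 1) * Gamma (real n + a + 1)
     / (2 powr (a + b + 1) * Gamma (a + 1) * Gamma (a + 2) * Gamma (real n + 1) * Gamma (real n + b + 1))"
  using n
proof (induction n rule: nat_induct_at_least)
  case base
  have G: "Gamma (a + 2) = (a + 1) * Gamma (a + 1)" "Gamma (b + 2) = (b + 1) * Gamma (b + 1)"
    using Gamma_plus1_real[of "a + 1"] Gamma_plus1_real[of "b + 1"] a b by (simp_all add: add.assoc)
  have "jacobi_K a b 1 1 = (jacobi_p a b 0 1)\<^sup>2"
    by (simp add: jacobi_K_def power2_eq_square)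
  also have "\<dots> = Gamma (a + b + 2) / (2 powr (a + b + 1) * Gamma (a + 1) * Gamma (b + 1))"
    by (rule jacobi_p_0_at_1_sq[OF a b])
  also have "\<dots> = 1 * (1 + b) * Gamma (a + b + 2) * Gamma (a + 2)
     / (2 powr (a + b + 1) * Gamma (a + 1) * Gamma (a + 2) * 1 * Gamma (b + 2))"
    using a b by (simp add: G divide_simps)
  finally show ?case
    using Gamma_fact[of 1, where 'a=real] by (simp add: add_ac)
next
  case (Suc n)
  have pos: "Gamma (real n + a + b + 1) > 0" "Gamma (real n + a + 1) > 0" "Gamma (real n + 1) > 0"
    "Gamma (real n + b + 1) > 0" "Gamma (a + 1) > 0"
    using a b Suc by auto
  have rec: "Gamma (real (Suc n) + a + b + 1) = (real n + a + b + 1) * Gamma (real n + a + b + 1)"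
    "Gamma (real (Suc n) + a + 1) = (real n + a + 1) * Gamma (real n + a + 1)"
    "Gamma (real (Suc n) + 1) = (real n + 1) * Gamma (real n + 1)"
    "Gamma (real (Suc n) + b + 1) = (real n + b + 1) * Gamma (real n + b + 1)"
    "Gamma (a + 2) = (a + 1) * Gamma (a + 1)"
    using Gamma_plus1_real[of "real n + a + b + 1"] Gamma_plus1_real[of "real n + a + 1"]
      Gamma_plus1_real[of "real n + 1"] Gamma_plus1_real[of "real n + b + 1"] Gamma_plus1_real[of "a + 1"]
      a b Suc by (simp_all add: algebra_simps)
  \<comment> \<open>the step is the identity n (n + b) + (a + 1) (2n + a + b + 1) = (n + a + 1) (n + a + b + 1)\<close>
  have field: "real n * (real n + b) * gnab * gna / (P * ga * ((a + 1) * ga) * gn * gnb)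
      + gna * (2 * real n + a + b + 1) * gnab / (P * gn * ga\<^sup>2 * gnb)
    = real (Suc n) * (real (Suc n) + b) * ((real n + a + b + 1) * gnab) * ((real n + a + 1) * gna)
      / (P * ga * ((a + 1) * ga) * ((real n + 1) * gn) * ((real n + b + 1) * gnb))"
    if "gnab > 0" "gna > 0" "ga > 0" "gn > 0" "gnb > 0" "P > 0" for gnab gna ga gn gnb P :: real
    using that a b by (simp add: divide_simps power2_eq_square) (simp add: algebra_simps)
  have "jacobi_K a b (Suc n) 1 = jacobi_K a b n 1 + (jacobi_p a b n 1)\<^sup>2"
    by (simp add: jacobi_K_def power2_eq_square)
  also have "\<dots> = real (Suc n) * (real (Suc n) + b) * Gamma (real (Suc n) + a + b + 1)
      * Gamma (real (Suc n) + a + 1) / (2 powr (a + b + 1) * Gamma (a + 1) * Gamma (a + 2)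
      * Gamma (real (Suc n) + 1) * Gamma (real (Suc n) + b + 1))"
    unfolding Suc.IH jacobi_p_at_1_sq_Gamma[OF a b Suc.hyps] rec using pos by (intro field) auto
  finally show ?case .
qed

section \<open>Ratios of Gamma values\<close>

lemma ln_Gamma_convex:
  fixes u v p q :: real
  assumes "u > 0" "v > 0" "p \<ge> 0" "q \<ge> 0" "p + q > 0"
  shows "(p + q) * ln (Gamma ((p * u + q * v) / (p + q))) \<le> p * ln (Gamma u) + q * ln (Gamma v)"
proof -
  define t where "t = q / (p + q)"
  have "1 - t = p / (p + q)"
    using assms by (simp add: t_def field_simps)
  moreover from this have "(1 - t) * u + t * v = (p * u + q * v) / (p + q)"
    by (simp add: t_def add_divide_distrib)
  moreover have "0 \<le> t" "t \<le> 1"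
    using assms by (simp_all add: t_def)
  ultimately have "ln (Gamma ((p * u + q * v) / (p + q)))
      \<le> p / (p + q) * ln (Gamma u) + q / (p + q) * ln (Gamma v)"
    using convex_onD[OF log_convex_Gamma_real, of t u v] assms by (simp add: o_def t_def)
  then have "(p + q) * ln (Gamma ((p * u + q * v) / (p + q)))
      \<le> (p + q) * (p / (p + q) * ln (Gamma u) + q / (p + q) * ln (Gamma v))"
    using assms by (intro mult_left_mono) auto
  also have "\<dots> = p * ln (Gamma u) + q * ln (Gamma v)"
    using assms by (simp add: distrib_left)
  finally show ?thesis .
qed

lemma ln_Gamma_plus1:
  assumes "(x::real) > 0"
  shows "ln (Gamma (x + 1)) = ln x + ln (Gamma x)"
  unfolding Gamma_plus1_real[OF assms] by (rule ln_mult_pos[OF assms Gamma_real_pos[OF assms]])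

lemma Gamma_plus_le:
  assumes x: "(x::real) > 0" and s: "s \<ge> 0"
  shows "Gamma (x + s) \<le> Gamma x * (x + s) powr s"
proof -
  have "(1 * x + s * (x + s + 1)) / (1 + s) = x + s"
    using s by (simp add: field_simps)
  then have "(1 + s) * ln (Gamma (x + s)) \<le> ln (Gamma x) + s * ln (Gamma (x + s + 1))"
    using ln_Gamma_convex[of x "x + s + 1" 1 s] x s by simp
  also have "ln (Gamma (x + s + 1)) = ln (x + s) + ln (Gamma (x + s))"
    using ln_Gamma_plus1[of "x + s"] x s by simp
  finally have "ln (Gamma (x + s)) \<le> ln (Gamma x) + s * ln (x + s)"
    by (simp add: algebra_simps)
  then have "exp (ln (Gamma (x + s))) \<le> exp (ln (Gamma x) + s * ln (x + s))"
    by simp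
  then show ?thesis
    using x s by (simp add: exp_add powr_def)
qed

lemma Gamma_plus_ge:
  assumes x: "(x::real) > 0" and s: "s \<ge> 0"
  shows "Gamma x * x powr (s + 1) / (x + s) \<le> Gamma (x + s)"
proof -
  have "(s * x + 1 * (x + s + 1)) / (s + 1) = x + 1"
    using s by (simp add: field_simps)
  then have "(s + 1) * ln (Gamma (x + 1)) \<le> s * ln (Gamma x) + ln (Gamma (x + s + 1))"
    using ln_Gamma_convex[of x "x + s + 1" s 1] x s by simp
  also have "ln (Gamma (x + s + 1)) = ln (x + s) + ln (Gamma (x + s))"
    using ln_Gamma_plus1[of "x + s"] x s by simp
  also have "ln (Gamma (x + 1)) = ln x + ln (Gamma x)"
    using ln_Gamma_plus1[OF x] .
  finally have "ln (Gamma x) + (s + 1) * ln x - ln (x + s) \<le> ln (Gamma (x + s))"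
    by (simp add: algebra_simps)
  then have "exp (ln (Gamma x) + (s + 1) * ln x - ln (x + s)) \<le> exp (ln (Gamma (x + s)))"
    by simp
  then show ?thesis
    using x s by (simp add: exp_add exp_diff powr_def)
qed

definition Gamma_ratio :: "real \<Rightarrow> real \<Rightarrow> real \<Rightarrow> real" where
  "Gamma_ratio x s t = Gamma (x + s) / (Gamma x * t powr s)"

lemma Gamma_ratio_bounds_nonneg:
  assumes t: "0 < t" "t \<le> x" and s: "0 \<le> s"
  shows "x / (x + s) \<le> Gamma_ratio x s t" "Gamma_ratio x s t \<le> exp (s * ((x + s) / t - 1))"
proof -
  have x: "x > 0" using t by simp
  have denom: "Gamma x * t powr s > 0" using x t by simp
  have "Gamma x * t powr s * (x / (x + s)) \<le> Gamma x * x powr (s + 1) / (x + s)"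
    using x t s by (simp add: powr_add powr_mono2 mult_left_mono divide_right_mono)
  also have "\<dots> \<le> Gamma (x + s)"
    using Gamma_plus_ge[OF x s] .
  finally show "x / (x + s) \<le> Gamma_ratio x s t"
    using denom by (simp add: Gamma_ratio_def pos_le_divide_eq mult.commute)
  have "((x + s) / t) powr s = exp (s * ln ((x + s) / t))"
    using x t s by (simp add: powr_def)
  also have "\<dots> \<le> exp (s * ((x + s) / t - 1))"
    using x t s by (simp add: mult_left_mono ln_le_minus_one)
  finally have "Gamma x * (x + s) powr s \<le> Gamma x * t powr s * exp (s * ((x + s) / t - 1))"
    using x t s by (simp add: powr_divide divide_le_eq mult_ac)
  with Gamma_plus_le[OF x s] show "Gamma_ratio x s t \<le> exp (s * ((x + s) / t - 1))"
    using denom by (simp add: Gamma_ratio_def pos_divide_le_eq mult.commute)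
qed

lemma Gamma_ratio_bounds_neg:
  assumes x: "1 \<le> x" and s: "-1/2 \<le> s" "s \<le> 0" and t: "0 < t" "t \<le> x" "x \<le> 4 * t"
  shows "1/2 \<le> Gamma_ratio x s t" "Gamma_ratio x s t \<le> 4"
proof -
  define y where "y = x + s"
  have y: "1/2 \<le> y" "x / 2 \<le> y" "y \<le> x" using x s by (auto simp: y_def)
  have x_eq: "x = y + (- s)" by (simp add: y_def)
  have nonzero: "x \<noteq> 0" "y \<noteq> 0" using x y by auto
  have ratio: "Gamma_ratio x s t = Gamma y / (Gamma x * t powr s)"
    by (simp add: Gamma_ratio_def y_def)
  have pos: "Gamma x > 0" "Gamma y > 0" "t powr s > 0" "x powr s > 0" "y powr s > 0"
    using x y t by auto
  have "Gamma x \<le> Gamma y * x powr (- s)"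
    using Gamma_plus_le[of y "- s"] y s by (simp add: x_eq)
  then have "Gamma x * x powr s \<le> Gamma y * x powr (- s) * x powr s"
    using pos by (intro mult_right_mono) auto
  also have "\<dots> = Gamma y"
    using nonzero by (simp add: mult.assoc flip: powr_add)
  finally have lower: "Gamma x * x powr s \<le> Gamma y" .
  have "Gamma y * y powr (- s + 1) / x \<le> Gamma x"
    using Gamma_plus_ge[of y "- s"] y s by (simp add: x_eq)
  moreover have "y powr (- s + 1) = y / y powr s"
    using y by (simp add: powr_diff)
  ultimately have "Gamma y * (y / y powr s) \<le> Gamma x * x"
    using x by (simp add: pos_divide_le_eq)
  then have upper: "Gamma y \<le> Gamma x * y powr s * (x / y)"
    using y nonzero by (simp add: divide_le_eq field_simps)
  have "1/2 \<le> (x / t) powr s"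
  proof -
    have "(1/2 :: real) = 4 powr (- 1/2)"
      by (simp add: powr_minus_divide powr_half_sqrt)
    also have "\<dots> \<le> 4 powr s"
      using s by (intro powr_mono) auto
    also have "\<dots> \<le> (x / t) powr s"
      using x t s by (intro powr_mono2') (auto simp: field_simps)
    finally show ?thesis .
  qed
  also have "(x / t) powr s \<le> Gamma_ratio x s t"
    using lower pos t by (simp add: ratio powr_divide field_simps)
  finally show "1/2 \<le> Gamma_ratio x s t" .
  have "(y / t) powr s \<le> (1/2) powr s"
    using y t s by (intro powr_mono2') (auto simp: field_simps)
  also have "(1/2 :: real) powr s = 2 powr (- s)"
    by (simp add: powr_minus_divide powr_divide)
  also have "\<dots> \<le> 2 powr 1"
    using s by (intro powr_mono) auto
  finally have "(y / t) powr s * (x / y) \<le> 2 * 2"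
    using y x by (intro mult_mono) (auto simp: field_simps)
  moreover have "Gamma_ratio x s t \<le> (y / t) powr s * (x / y)"
    using upper pos t nonzero by (simp add: ratio powr_divide field_simps)
  ultimately show "Gamma_ratio x s t \<le> 4" by simp
qed

lemma exp_3_le: "exp (3::real) \<le> 27"
proof -
  have "exp (3::real) = exp 1 ^ 3"
    by (simp flip: exp_of_nat_mult)
  also have "\<dots> \<le> 3 ^ 3"
    by (intro power_mono exp_le) simp
  finally show ?thesis by simp
qed

lemma Gamma_ratio_shifted_bounds:
  assumes n: "1 \<le> n" and a: "-1/2 \<le> a" "a \<le> real n" "0 \<le> a \<Longrightarrow> a\<^sup>2 \<le> real n"
    and c: "1/2 \<le> c" "c \<le> max 1 (a + 1)"
  shows "1/2 \<le> Gamma_ratio (real n + c) a n" "Gamma_ratio (real n + c) a n \<le> 27"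
proof -
  have t: "0 < real n" "real n \<le> real n + c"
    using n c by auto
  have "1/2 \<le> Gamma_ratio (real n + c) a n \<and> Gamma_ratio (real n + c) a n \<le> 27"
  proof (cases "0 \<le> a")
    case True
    have "1/2 \<le> (real n + c) / (real n + c + a)"
      using a c t True by (simp add: field_simps)
    also have "\<dots> \<le> Gamma_ratio (real n + c) a n"
      using Gamma_ratio_bounds_nonneg(1)[OF t True] .
    finally have lower: "1/2 \<le> Gamma_ratio (real n + c) a n" .
    have "a * (c + a) \<le> a * (2 * a + 1)"
      using True c by (intro mult_left_mono) auto
    also have "\<dots> \<le> 3 * real n"
      using a True by (simp add: power2_eq_square algebra_simps)
    finally have "a * ((real n + c + a) / real n - 1) \<le> 3"
      using t by (simp add: field_simps)
    then have "Gamma_ratio (real n + c) a n \<le> exp 3"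
      using Gamma_ratio_bounds_nonneg(2)[OF t True] by (meson exp_le_cancel_iff order_trans)
    with lower exp_3_le show ?thesis by linarith
  next
    case False
    then have "c \<le> 1" using c by simp
    then have "1/2 \<le> Gamma_ratio (real n + c) a n \<and> Gamma_ratio (real n + c) a n \<le> 4"
      using Gamma_ratio_bounds_neg[of "real n + c" a "real n"] n a c False by auto
    then show ?thesis by linarith
  qed
  then show "1/2 \<le> Gamma_ratio (real n + c) a n" "Gamma_ratio (real n + c) a n \<le> 27"
    by auto
qed

lemma jacobi_parameter_bounds:
  assumes ab: "b \<le> a" and b: "-1/2 \<le> b" and n: "1 \<le> n" and nab: "(a + \<bar>b\<bar>)\<^sup>2 \<le> real n"
  shows "-1/2 \<le> a" "a \<le> real n" "0 \<le> a \<Longrightarrow> a\<^sup>2 \<le> real n"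
    "0 \<le> a + b + 1" "a + b + 1 \<le> 2 * real n" "b \<le> real n"
proof -
  have t0: "0 \<le> a + \<bar>b\<bar>"
    using ab by linarith
  have tn: "a + \<bar>b\<bar> \<le> real n"
  proof (cases "a + \<bar>b\<bar> \<le> 1")
    case False
    then have "a + \<bar>b\<bar> \<le> (a + \<bar>b\<bar>)\<^sup>2"
      by (simp add: power2_eq_square)
    with nab show ?thesis by linarith
  qed (use n in auto)
  show "-1/2 \<le> a" "0 \<le> a + b + 1" "a + b + 1 \<le> 2 * real n" "b \<le> real n" "a \<le> real n"
    using ab b n t0 tn by linarith+
  show "a\<^sup>2 \<le> real n" if "0 \<le> a"
  proof -
    have "a\<^sup>2 \<le> (a + \<bar>b\<bar>)\<^sup>2"
      using that by (intro power_mono) auto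
    with nab show ?thesis by linarith
  qed
qed

lemma jacobi_p_at_1_sq_eq_Gamma_ratio:
  assumes a: "a > -1" and b: "b > -1" and n: "n \<ge> 1"
  shows "(jacobi_p a b n 1)\<^sup>2 = Gamma_ratio (real n + 1) a n * Gamma_ratio (real n + b + 1) a n
    * ((2 * real n + a + b + 1) / (2 * real n))
    * (real n powr (a + 1/2) / (2 powr ((a + b) / 2) * Gamma (a + 1)))\<^sup>2"
proof -
  define na where "na = real n powr a"
  define P where "P = (2::real) powr (a + b)"
  have pos: "na > 0" "P > 0" "real n > 0" "Gamma (real n + a + 1) > 0" "Gamma (real n + b + 1) > 0"
    "Gamma (real n + 1) > 0" "Gamma (a + 1) > 0" "Gamma (real n + a + b + 1) > 0"
    using a b n by (auto simp: na_def P_def)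
  have "(real n powr (a + 1/2))\<^sup>2 = real n powr ((a + 1/2) + (a + 1/2))"
    by (simp only: power2_eq_square powr_add[symmetric])
  also have "(a + 1/2) + (a + 1/2) = a + a + 1"
    by simp
  also have "real n powr (a + a + 1) = na * na * real n"
    using pos by (simp only: powr_add powr_one na_def)
  finally have "(real n powr (a + 1/2))\<^sup>2 = na * na * real n" .
  moreover have "(2 powr ((a + b) / 2))\<^sup>2 = P"
    by (simp add: P_def power2_eq_square flip: powr_add)
  ultimately have E: "(real n powr (a + 1/2) / (2 powr ((a + b) / 2) * Gamma (a + 1)))\<^sup>2
      = na * na * real n / (P * (Gamma (a + 1))\<^sup>2)"
    by (simp add: power_divide power_mult_distrib)
  have Q: "Gamma_ratio (real n + 1) a n = Gamma (real n + a + 1) / (Gamma (real n + 1) * na)"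
    "Gamma_ratio (real n + b + 1) a n = Gamma (real n + a + b + 1) / (Gamma (real n + b + 1) * na)"
    by (simp_all add: Gamma_ratio_def na_def add_ac)
  have P2: "2 powr (a + b + 1) = P * 2"
    by (simp add: P_def powr_add)
  have field: "gna * (2 * real n + a + b + 1) * gnab / (P * 2 * gn * ga\<^sup>2 * gnb)
      = gna / (gn * na) * (gnab / (gnb * na)) * ((2 * real n + a + b + 1) / (2 * real n))
        * (na * na * real n / (P * ga\<^sup>2))"
    if "gna > 0" "gnab > 0" "gn > 0" "gnb > 0" "ga > 0" for gna gnab gn gnb ga :: real
    using that pos by (simp add: divide_simps power2_eq_square)
  show ?thesis
    unfolding jacobi_p_at_1_sq_Gamma[OF a b n] E Q P2 using pos by (intro field) auto
qed

lemma jacobi_K_at_1_eq_Gamma_ratio: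
  assumes a: "a > -1" and b: "b > -1" and n: "n \<ge> 1"
  shows "jacobi_K a b n 1 = Gamma_ratio (real n + 1) a n * Gamma_ratio (real n + b + 1) a n
    * ((real n + b) / (2 * real n))
    * (real n powr (2 * a + 2) / (2 powr (a + b) * Gamma (a + 1) * Gamma (a + 2)))"
proof -
  define na where "na = real n powr a"
  define P where "P = (2::real) powr (a + b)"
  have pos: "na > 0" "P > 0" "real n > 0" "Gamma (real n + a + 1) > 0" "Gamma (real n + b + 1) > 0"
    "Gamma (real n + 1) > 0" "Gamma (a + 1) > 0" "Gamma (a + 2) > 0" "Gamma (real n + a + b + 1) > 0"
    using a b n by (auto simp: na_def P_def)
  have E: "real n powr (2 * a + 2) = na * na * real n * real n"
  proof -
    have "real n powr (2 * a + 2) = real n powr (a + a + 1 + 1)"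
      by (simp add: algebra_simps)
    then show ?thesis
      using pos by (simp only: powr_add powr_one na_def)
  qed
  have Q: "Gamma_ratio (real n + 1) a n = Gamma (real n + a + 1) / (Gamma (real n + 1) * na)"
    "Gamma_ratio (real n + b + 1) a n = Gamma (real n + a + b + 1) / (Gamma (real n + b + 1) * na)"
    by (simp_all add: Gamma_ratio_def na_def add_ac)
  have P2: "2 powr (a + b + 1) = P * 2"
    by (simp add: P_def powr_add)
  have field: "real n * (real n + b) * gnab * gna / (P * 2 * ga * ga2 * gn * gnb)
      = gna / (gn * na) * (gnab / (gnb * na)) * ((real n + b) / (2 * real n))
        * (na * na * real n * real n / (P * ga * ga2))"
    if "gna > 0" "gnab > 0" "gn > 0" "gnb > 0" "ga > 0" "ga2 > 0" for gna gnab gn gnb ga ga2 :: real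
    using that pos by (simp add: divide_simps)
  show ?thesis
    unfolding jacobi_K_at_1_Gamma[OF a b n] E Q P2 P_def[symmetric] using pos by (intro field) auto
qed

lemma Gamma_ratio_product_bounds:
  assumes "b \<le> a" "-1/2 \<le> b" "1 \<le> n" "(a + \<bar>b\<bar>)\<^sup>2 \<le> real n"
  shows "1/4 \<le> Gamma_ratio (real n + 1) a n * Gamma_ratio (real n + b + 1) a n"
    "Gamma_ratio (real n + 1) a n * Gamma_ratio (real n + b + 1) a n \<le> 729"
proof -
  note params = jacobi_parameter_bounds[OF assms]
  have Q1: "1/2 \<le> Gamma_ratio (real n + 1) a n" "Gamma_ratio (real n + 1) a n \<le> 27"
    using Gamma_ratio_shifted_bounds[of n a 1] assms params by auto
  have Q2: "1/2 \<le> Gamma_ratio (real n + b + 1) a n" "Gamma_ratio (real n + b + 1) a n \<le> 27"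
    using Gamma_ratio_shifted_bounds[of n a "b + 1"] assms params by (auto simp: add.assoc)
  have "1/2 * (1/2) \<le> Gamma_ratio (real n + 1) a n * Gamma_ratio (real n + b + 1) a n"
    using Q1 Q2 by (intro mult_mono) auto
  then show "1/4 \<le> Gamma_ratio (real n + 1) a n * Gamma_ratio (real n + b + 1) a n"
    by simp
  have "Gamma_ratio (real n + 1) a n * Gamma_ratio (real n + b + 1) a n \<le> 27 * 27"
    using Q1 Q2 by (intro mult_mono) auto
  then show "Gamma_ratio (real n + 1) a n * Gamma_ratio (real n + b + 1) a n \<le> 729"
    by simp
qed

lemma jacobi_p_at_1_bounds:
  assumes "b \<le> a" "-1/2 \<le> b" "1 \<le> n" "(a + \<bar>b\<bar>)\<^sup>2 \<le> real n"
  defines "E \<equiv> real n powr (a + 1/2) / (2 powr ((a + b) / 2) * Gamma (a + 1))"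
  shows "1/2 * E \<le> jacobi_p a b n 1" "jacobi_p a b n 1 \<le> 39 * E"
proof -
  note params = jacobi_parameter_bounds[OF assms(1-4)]
  have a: "a > -1" and b: "b > -1"
    using assms params by auto
  define R where "R = Gamma_ratio (real n + 1) a n * Gamma_ratio (real n + b + 1) a n
    * ((2 * real n + a + b + 1) / (2 * real n))"
  have F: "1 \<le> (2 * real n + a + b + 1) / (2 * real n)" "(2 * real n + a + b + 1) / (2 * real n) \<le> 2"
    "0 \<le> (2 * real n + a + b + 1) / (2 * real n)"
    using params assms by (auto simp: field_simps)
  note Q = Gamma_ratio_product_bounds[OF assms(1-4)]
  have "1/4 * 1 \<le> R"
    unfolding R_def using Q F by (intro mult_mono) auto
  then have "(1/2)\<^sup>2 \<le> R"
    by (simp add: power2_eq_square)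
  then have sqrt_lower: "1/2 \<le> sqrt R"
    by (rule real_le_rsqrt)
  have "R \<le> 729 * 2"
    unfolding R_def using Q F by (intro mult_mono) auto
  then have "R \<le> 39\<^sup>2"
    by simp
  then have sqrt_upper: "sqrt R \<le> 39"
    by (rule real_le_lsqrt[rotated]) simp
  have "E > 0"
    using a assms by (simp add: E_def)
  have "jacobi_p a b n 1 = sqrt ((jacobi_p a b n 1)\<^sup>2)"
    using jacobi_p_at_1_pos[OF a b, of n] by simp
  also have "(jacobi_p a b n 1)\<^sup>2 = R * E\<^sup>2"
    unfolding R_def E_def by (rule jacobi_p_at_1_sq_eq_Gamma_ratio[OF a b assms(3)])
  also have "sqrt (R * E\<^sup>2) = sqrt R * E"
    using \<open>E > 0\<close> by (simp add: real_sqrt_mult)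
  finally show "1/2 * E \<le> jacobi_p a b n 1" "jacobi_p a b n 1 \<le> 39 * E"
    using sqrt_lower sqrt_upper \<open>E > 0\<close> by (auto intro: mult_right_mono)
qed

lemma jacobi_K_at_1_bounds:
  assumes "b \<le> a" "-1/2 \<le> b" "1 \<le> n" "(a + \<bar>b\<bar>)\<^sup>2 \<le> real n"
  defines "E \<equiv> real n powr (2 * a + 2) / (2 powr (a + b) * Gamma (a + 1) * Gamma (a + 2))"
  shows "1/16 * E \<le> jacobi_K a b n 1" "jacobi_K a b n 1 \<le> 729 * E"
proof -
  note params = jacobi_parameter_bounds[OF assms(1-4)]
  have a: "a > -1" and b: "b > -1"
    using assms params by auto
  define R where "R = Gamma_ratio (real n + 1) a n * Gamma_ratio (real n + b + 1) a n
    * ((real n + b) / (2 * real n))"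
  have F: "1/4 \<le> (real n + b) / (2 * real n)" "(real n + b) / (2 * real n) \<le> 1"
    "0 \<le> (real n + b) / (2 * real n)"
    using params assms by (auto simp: field_simps)
  note Q = Gamma_ratio_product_bounds[OF assms(1-4)]
  have "1/4 * (1/4) \<le> R"
    unfolding R_def using Q F by (intro mult_mono) auto
  moreover have "R \<le> 729 * 1"
    unfolding R_def using Q F by (intro mult_mono) auto
  ultimately have R: "1/16 \<le> R" "R \<le> 729"
    by simp_all
  have "E > 0"
    using a assms by (simp add: E_def)
  have "jacobi_K a b n 1 = R * E"
    by (simp add: jacobi_K_at_1_eq_Gamma_ratio[OF a b assms(3)] R_def E_def)
  then show "1/16 * E \<le> jacobi_K a b n 1" "jacobi_K a b n 1 \<le> 729 * E"
    using R \<open>E > 0\<close> by (auto intro: mult_right_mono)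
qed

theorem corollary7p1:
  shows "\<exists>c1 c2 :: real. c1 > 0 \<and> c2 > 0 \<and>
    (\<forall>(a::real) (b::real) (n::nat).
       a \<ge> b \<and> b \<ge> -1/2 \<and> n \<ge> 1 \<and> real n \<ge> (a + \<bar>b\<bar>)\<^sup>2 \<longrightarrow>
       c1 * (real n powr (a + 1/2) / (2 powr ((a + b) / 2) * Gamma (a + 1)))
         \<le> jacobi_p a b n 1 \<and>
       jacobi_p a b n 1
         \<le> c2 * (real n powr (a + 1/2) / (2 powr ((a + b) / 2) * Gamma (a + 1))) \<and>
       c1 * (real n powr (2 * a + 2) / (2 powr (a + b) * Gamma (a + 1) * Gamma (a + 2)))
         \<le> jacobi_K a b n 1 \<and>
       jacobi_K a b n 1
         \<le> c2 * (real n powr (2 * a + 2) / (2 powr (a + b) * Gamma (a + 1) * Gamma (a + 2))))"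
proof -
  have "1/16 * (real n powr (a + 1/2) / (2 powr ((a + b) / 2) * Gamma (a + 1))) \<le> jacobi_p a b n 1 \<and>
    jacobi_p a b n 1 \<le> 729 * (real n powr (a + 1/2) / (2 powr ((a + b) / 2) * Gamma (a + 1))) \<and>
    1/16 * (real n powr (2 * a + 2) / (2 powr (a + b) * Gamma (a + 1) * Gamma (a + 2)))
      \<le> jacobi_K a b n 1 \<and>
    jacobi_K a b n 1 \<le> 729 * (real n powr (2 * a + 2) / (2 powr (a + b) * Gamma (a + 1) * Gamma (a + 2)))"
    if hyps: "b \<le> a" "-1/2 \<le> b" "1 \<le> n" "(a + \<bar>b\<bar>)\<^sup>2 \<le> real n" for a b :: real and n :: nat
  proof -
    have "Gamma (a + 1) > 0" "Gamma (a + 2) > 0"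
      using hyps by auto
    then have "0 \<le> real n powr (a + 1/2) / (2 powr ((a + b) / 2) * Gamma (a + 1))"
      "0 \<le> real n powr (2 * a + 2) / (2 powr (a + b) * Gamma (a + 1) * Gamma (a + 2))"
      by auto
    with jacobi_p_at_1_bounds[OF hyps] jacobi_K_at_1_bounds[OF hyps] show ?thesis
      by linarith
  qed
  then show ?thesis
    by (intro exI[of _ "1/16"] exI[of _ 729]) auto
qed

end
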